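(* ${\bf K^\boxdot}$ is sound and strongly complete with respect to the class of serial bimodal frames (both $R_1$ and $R_2$ serial): for every $\Gamma\subseteq\mathcal{L}(\boxdot)$ and $\phi\in\mathcal{L}(\boxdot)$, $\Gamma\vdash_{{\bf K^\boxdot}}\phi$ iff $\phi$ is true at every state of every serial bimodal model at which all formulas of $\Gamma$ are true.
   Context: Fix a nonempty set $\mathbf{P}$ of propositional variables. A bimodal model is $\langle S,R_1,R_2,V\rangle$ with $S$ nonempty, $R_1,R_2\subseteq S\times S$, $V:\mathbf{P}\to\mathcal{P}(S)$. $\mathcal{L}(\boxdot):\ \phi::=p\mid\neg\phi\mid(\phi\wedge\phi)\mid\boxdot\phi$. Truth: $\mathcal{M},s\vDash\boxdot\phi$ iff for all $t,u$ with $sR_1t$ and $sR_2u$, ($\mathcal{M},t\vDash\phi\iff\mathcal{M},u\vDash\phi$); atoms and Booleans as usual. ${\bf K^\boxdot}$ has axioms: all instances of propositional tautologies; $\boxdot\top$; $\boxdot\phi\leftrightarrow\boxdot\neg\phi$; $\boxdot\phi\wedge\boxdot\psi\to\boxdot(\phi\wedge\psi)$; $\boxdot\phi\to\boxdot(\phi\vee\psi)\vee\boxdot(\neg\phi\vee\chi)$; and rules: modus ponens and RE: from $\phi\leftrightarrow\psi$ infer $\boxdot\phi\leftrightarrow\boxdot\psi$. *)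

theory Defs
  imports Main
begin

datatype 'p fm = Atom 'p | Neg "'p fm" | Conj "'p fm" "'p fm" | Dot "'p fm"

definition Top :: "'p fm" where "Top = Neg (Conj (Atom undefined) (Neg (Atom undefined)))"
definition Disj :: "'p fm \<Rightarrow> 'p fm \<Rightarrow> 'p fm" where "Disj a b = Neg (Conj (Neg a) (Neg b))"
definition Imp :: "'p fm \<Rightarrow> 'p fm \<Rightarrow> 'p fm" where "Imp a b = Neg (Conj a (Neg b))"
definition Iff :: "'p fm \<Rightarrow> 'p fm \<Rightarrow> 'p fm" where "Iff a b = Conj (Imp a b) (Imp b a)"

text \<open>Propositional (Boolean) valuation semantics, treating Dot-formulas as atoms,
  used to define "instance of a propositional tautology".\<close>
fun peval :: "('p fm \<Rightarrow> bool) \<Rightarrow> 'p fm \<Rightarrow> bool" where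
  "peval v (Atom p) = v (Atom p)"
| "peval v (Neg a) = (\<not> peval v a)"
| "peval v (Conj a b) = (peval v a \<and> peval v b)"
| "peval v (Dot a) = v (Dot a)"

definition taut :: "'p fm \<Rightarrow> bool" where "taut a \<longleftrightarrow> (\<forall>v. peval v a)"

inductive kthm :: "'p fm \<Rightarrow> bool" where
  Tau: "taut a \<Longrightarrow> kthm a"
| DotTop: "kthm (Dot Top)"
| DotNeg: "kthm (Iff (Dot a) (Dot (Neg a)))"
| DotConj: "kthm (Imp (Conj (Dot a) (Dot b)) (Dot (Conj a b)))"
| DotDisj: "kthm (Imp (Dot a) (Disj (Dot (Disj a b)) (Dot (Disj (Neg a) c))))"
| MP: "kthm (Imp a b) \<Longrightarrow> kthm a \<Longrightarrow> kthm b"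
| RE: "kthm (Iff a b) \<Longrightarrow> kthm (Iff (Dot a) (Dot b))"

definition derives :: "'p fm set \<Rightarrow> 'p fm \<Rightarrow> bool" where
  "derives G a \<longleftrightarrow> (\<exists>xs. set xs \<subseteq> G \<and> kthm (foldr Imp xs a))"

fun sat :: "'s set \<Rightarrow> ('s \<Rightarrow> 's \<Rightarrow> bool) \<Rightarrow> ('s \<Rightarrow> 's \<Rightarrow> bool) \<Rightarrow> ('p \<Rightarrow> 's set) \<Rightarrow> 's \<Rightarrow> 'p fm \<Rightarrow> bool" where
  "sat S R1 R2 V s (Atom p) = (s \<in> V p)"
| "sat S R1 R2 V s (Neg a) = (\<not> sat S R1 R2 V s a)"
| "sat S R1 R2 V s (Conj a b) = (sat S R1 R2 V s a \<and> sat S R1 R2 V s b)"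
| "sat S R1 R2 V s (Dot a) = (\<forall>t\<in>S. \<forall>u\<in>S. R1 s t \<longrightarrow> R2 s u \<longrightarrow> (sat S R1 R2 V t a \<longleftrightarrow> sat S R1 R2 V u a))"

definition model :: "'s set \<Rightarrow> ('s \<Rightarrow> 's \<Rightarrow> bool) \<Rightarrow> ('s \<Rightarrow> 's \<Rightarrow> bool) \<Rightarrow> ('p \<Rightarrow> 's set) \<Rightarrow> bool" where
  "model S R1 R2 V \<longleftrightarrow> S \<noteq> {} \<and> (\<forall>s t. R1 s t \<longrightarrow> s \<in> S \<and> t \<in> S)
     \<and> (\<forall>s t. R2 s t \<longrightarrow> s \<in> S \<and> t \<in> S) \<and> (\<forall>p. V p \<subseteq> S)"

definition serial :: "'s set \<Rightarrow> ('s \<Rightarrow> 's \<Rightarrow> bool) \<Rightarrow> bool" where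
  "serial S R \<longleftrightarrow> (\<forall>s\<in>S. \<exists>t\<in>S. R s t)"

definition serial_conseq :: "'s itself \<Rightarrow> 'p fm set \<Rightarrow> 'p fm \<Rightarrow> bool" where
  "serial_conseq _ G a \<longleftrightarrow> (\<forall>(S::'s set) R1 R2 V. model S R1 R2 V \<and> serial S R1 \<and> serial S R2 \<longrightarrow>
      (\<forall>s\<in>S. (\<forall>g\<in>G. sat S R1 R2 V s g) \<longrightarrow> sat S R1 R2 V s a))"

end

theory Submission
  imports Defs
begin

text \<open>Soundness is a direct check of the axioms and needs no seriality at all.
  Completeness uses a canonical model on the maximal consistent sets. The successors of \<open>s\<close>
  are the maximal consistent extensions of \<open>nec s\<close>, the formulas \<open>a\<close> with
  \<open>\<boxdot>(a \<or> b) \<in> s\<close> for every \<open>b\<close>. This set is closed under provable consequence and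
  conjunction, and by the axiom \<open>\<boxdot>a \<rightarrow> \<boxdot>(a \<or> b) \<or> \<boxdot>(\<not>a \<or> c)\<close> it contains \<open>a\<close>
  or \<open>\<not>a\<close> whenever \<open>\<boxdot>a \<in> s\<close>; so \<open>\<boxdot>a \<in> s\<close> holds iff all successors agree on \<open>a\<close>.
  If \<open>nec s\<close> is inconsistent, every formula is noncontingent at \<open>s\<close> and \<open>s\<close> itself is
  used instead, which keeps the canonical relation serial.\<close>

definition Bot :: "'p fm" where "Bot = Neg Top"

lemma peval_derived [simp]:
  "peval v Top"
  "\<not> peval v Bot"
  "peval v (Imp a b) = (peval v a \<longrightarrow> peval v b)"
  "peval v (Disj a b) = (peval v a \<or> peval v b)"
  "peval v (Iff a b) = (peval v a = peval v b)"
  by (auto simp: Top_def Bot_def Imp_def Disj_def Iff_def)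

lemma peval_foldr_Imp: "peval v (foldr Imp xs a) = ((\<forall>x\<in>set xs. peval v x) \<longrightarrow> peval v a)"
  by (induct xs) auto

lemma peval_foldr_Conj: "peval v (foldr Conj xs Top) = (\<forall>x\<in>set xs. peval v x)"
  by (induct xs) auto

lemma sat_derived [simp]:
  "sat S R1 R2 V s Top"
  "\<not> sat S R1 R2 V s Bot"
  "sat S R1 R2 V s (Imp a b) = (sat S R1 R2 V s a \<longrightarrow> sat S R1 R2 V s b)"
  "sat S R1 R2 V s (Disj a b) = (sat S R1 R2 V s a \<or> sat S R1 R2 V s b)"
  "sat S R1 R2 V s (Iff a b) = (sat S R1 R2 V s a = sat S R1 R2 V s b)"
  by (auto simp: Top_def Bot_def Imp_def Disj_def Iff_def)

lemma sat_foldr_Imp: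
  "sat S R1 R2 V s (foldr Imp xs a) = ((\<forall>x\<in>set xs. sat S R1 R2 V s x) \<longrightarrow> sat S R1 R2 V s a)"
  by (induct xs) auto

lemma peval_sat: "peval (sat S R1 R2 V s) a = sat S R1 R2 V s a"
  by (induct a) auto

subsection \<open>Soundness\<close>

lemma kthm_sat: "kthm a \<Longrightarrow> sat S R1 R2 V s a"
proof (induct arbitrary: s rule: kthm.induct)
  case (Tau a)
  then show ?case by (metis peval_sat taut_def)
next
  case (DotDisj a b c)
  show ?case
  proof (cases "(\<exists>t\<in>S. R1 s t) \<and> (\<exists>u\<in>S. R2 s u)")
    case True
    then obtain t u where "t \<in> S" "R1 s t" "u \<in> S" "R2 s u" by blast
    \<comment> \<open>if \<open>a\<close> holds at \<open>t\<close>, then \<open>a \<or> b\<close> holds at every successor; otherwise \<open>\<not>a \<or> c\<close> does\<close>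
    then show ?thesis by (cases "sat S R1 R2 V t a") (simp; metis)+
  qed auto
qed auto

lemma derives_serial_conseq: "derives G a \<Longrightarrow> serial_conseq TYPE('s) G a"
  unfolding derives_def serial_conseq_def by (metis kthm_sat sat_foldr_Imp subsetD)

lemma kthm_taut_consequence:
  assumes "\<And>v. (\<forall>h\<in>set hs. peval v h) \<Longrightarrow> peval v c" and "\<forall>h\<in>set hs. kthm h"
  shows "kthm c"
proof -
  have "kthm (foldr Imp hs c)"
    using assms(1) by (intro kthm.Tau) (simp add: taut_def peval_foldr_Imp)
  then show ?thesis
    using assms(2) by (induct hs) (auto intro: kthm.MP)
qed

lemma derives_kthm: "kthm a \<Longrightarrow> derives X a"
  unfolding derives_def by (intro exI[of _ "[]"]) simp

lemma derives_mem: "a \<in> X \<Longrightarrow> derives X a"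
  unfolding derives_def by (intro exI[of _ "[a]"]) (auto intro: kthm.Tau simp: taut_def)

lemma derives_MP:
  assumes "derives X (Imp a b)" and "derives X a"
  shows "derives X b"
proof -
  obtain xs ys where "set xs \<subseteq> X" "kthm (foldr Imp xs (Imp a b))"
    and "set ys \<subseteq> X" "kthm (foldr Imp ys a)"
    using assms by (auto simp: derives_def)
  moreover have "kthm (foldr Imp (xs @ ys) b)"
    by (rule kthm_taut_consequence[of "[foldr Imp xs (Imp a b), foldr Imp ys a]"])
      (use calculation in \<open>auto simp: peval_foldr_Imp simp del: foldr_append\<close>)
  ultimately show ?thesis
    unfolding derives_def by (intro exI[of _ "xs @ ys"]) auto
qed

lemma derives_taut_consequence:
  "(\<And>v. (\<forall>h\<in>set hs. peval v h) \<Longrightarrow> peval v c) \<Longrightarrow> \<forall>h\<in>set hs. derives X h \<Longrightarrow> derives X c"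
proof (induct hs arbitrary: c)
  case Nil
  then show ?case by (simp add: derives_kthm kthm.Tau taut_def)
next
  case (Cons h hs)
  then have "derives X (Imp h c)" by (metis list.set_intros(2) peval_derived(3) set_ConsD)
  then show ?case using Cons.prems(2) by (auto intro: derives_MP)
qed

lemma derives_Imp: "derives (insert a X) b \<Longrightarrow> derives X (Imp a b)"
proof -
  assume "derives (insert a X) b"
  then obtain xs where xs: "set xs \<subseteq> insert a X" "kthm (foldr Imp xs b)"
    by (auto simp: derives_def)
  have "kthm (foldr Imp (filter (\<lambda>x. x \<noteq> a) xs) (Imp a b))"
    by (rule kthm_taut_consequence[of "[foldr Imp xs b]"]) (use xs in \<open>auto simp: peval_foldr_Imp\<close>)
  then show ?thesis
    using xs(1) unfolding derives_def by (intro exI[of _ "filter (\<lambda>x. x \<noteq> a) xs"]) auto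
qed

definition consistent :: "'p fm set \<Rightarrow> bool" where
  "consistent X \<longleftrightarrow> \<not> derives X Bot"

definition mcs :: "'p fm set \<Rightarrow> bool" where
  "mcs X \<longleftrightarrow> consistent X \<and> (\<forall>a. consistent (insert a X) \<longrightarrow> a \<in> X)"

lemma inconsistent_insert_derives_Neg:
  "\<not> consistent (insert a X) \<Longrightarrow> derives X (Neg a)"
  unfolding consistent_def
  by (rule derives_taut_consequence[of "[Imp a Bot]"]) (auto dest: derives_Imp)

lemma consistent_insert_Neg: "\<not> derives X a \<Longrightarrow> consistent (insert (Neg a) X)"
  using inconsistent_insert_derives_Neg derives_taut_consequence[of "[Neg (Neg a)]" a X] by auto

lemma consistent_empty: "consistent {}"
  unfolding consistent_def derives_def by (auto dest: kthm_sat)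

lemma lindenbaum:
  assumes "consistent X"
  obtains M where "X \<subseteq> M" "mcs M"
proof -
  let ?A = "{Y. X \<subseteq> Y \<and> consistent Y}"
  have "\<exists>M\<in>?A. \<forall>Y\<in>?A. M \<subseteq> Y \<longrightarrow> Y = M"
  proof (rule subset_Zorn_nonempty)
    fix C assume C: "C \<noteq> {}" "subset.chain ?A C"
    have "consistent (\<Union>C)"
      unfolding consistent_def
    proof
      assume "derives (\<Union>C) Bot"
      then obtain xs where xs: "set xs \<subseteq> \<Union>C" "kthm (foldr Imp xs Bot)"
        by (auto simp: derives_def)
      then obtain Y where "Y \<in> C" "set xs \<subseteq> Y"
        using finite_subset_Union_chain[OF finite_set xs(1) C] by blast
      then show False
        using xs(2) C(2) by (auto simp: derives_def consistent_def subset.chain_def)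
    qed
    then show "\<Union>C \<in> ?A" using C unfolding subset.chain_def by blast
  qed (use assms in auto)
  then obtain M where "X \<subseteq> M" "consistent M" "\<forall>Y\<in>?A. M \<subseteq> Y \<longrightarrow> Y = M"
    by auto
  then have "mcs M"
    unfolding mcs_def by (metis insertI1 subset_insertI dual_order.trans mem_Collect_eq)
  with \<open>X \<subseteq> M\<close> show thesis by (rule that)
qed

lemma mcs_derives:
  assumes "mcs X" "derives X a"
  shows "a \<in> X"
proof -
  have "consistent (insert a X)"
  proof (rule ccontr)
    assume "\<not> consistent (insert a X)"
    then have "derives X (Neg a)" by (rule inconsistent_insert_derives_Neg)
    then have "derives X Bot"
      using assms(2) by (intro derives_taut_consequence[of "[Neg a, a]"]) auto
    with assms(1) show False by (simp add: mcs_def consistent_def)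
  qed
  with assms(1) show ?thesis by (simp add: mcs_def)
qed

lemma mcs_kthm: "mcs X \<Longrightarrow> kthm a \<Longrightarrow> a \<in> X"
  by (simp add: mcs_derives derives_kthm)

lemma mcs_Neg:
  assumes "mcs X"
  shows "Neg a \<in> X \<longleftrightarrow> a \<notin> X"
proof
  assume "Neg a \<in> X"
  show "a \<notin> X"
  proof
    assume "a \<in> X"
    with \<open>Neg a \<in> X\<close> have "derives X Bot"
      by (intro derives_taut_consequence[of "[Neg a, a]"]) (auto intro: derives_mem)
    with assms show False by (simp add: mcs_def consistent_def)
  qed
next
  assume "a \<notin> X"
  with assms show "Neg a \<in> X"
    by (meson inconsistent_insert_derives_Neg mcs_def mcs_derives)
qed

lemma mcs_Conj:
  assumes "mcs X"
  shows "Conj a b \<in> X \<longleftrightarrow> a \<in> X \<and> b \<in> X"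
proof
  assume "Conj a b \<in> X"
  then have "derives X a" "derives X b"
    by (intro derives_taut_consequence[of "[Conj a b]"]; auto intro: derives_mem)+
  with assms show "a \<in> X \<and> b \<in> X" by (simp add: mcs_derives)
next
  assume "a \<in> X \<and> b \<in> X"
  then have "derives X (Conj a b)"
    by (intro derives_taut_consequence[of "[a, b]"]) (auto intro: derives_mem)
  with assms show "Conj a b \<in> X" by (rule mcs_derives)
qed

lemma mcs_Imp: "mcs X \<Longrightarrow> Imp a b \<in> X \<Longrightarrow> a \<in> X \<Longrightarrow> b \<in> X"
  by (auto simp: Imp_def mcs_Neg mcs_Conj)

lemma mcs_Disj: "mcs X \<Longrightarrow> (Disj a b \<in> X) = (a \<in> X \<or> b \<in> X)"
  by (auto simp: Disj_def mcs_Neg mcs_Conj)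

lemma mcs_Iff: "mcs X \<Longrightarrow> Iff a b \<in> X \<Longrightarrow> (a \<in> X) = (b \<in> X)"
  by (auto simp: Iff_def mcs_Conj intro: mcs_Imp)

lemma mcs_Dot_iff:
  assumes "mcs X" "kthm (Iff a b)"
  shows "Dot a \<in> X \<longleftrightarrow> Dot b \<in> X"
  using mcs_Iff[OF assms(1) mcs_kthm[OF assms(1) kthm.RE[OF assms(2)]]] .

lemma mcs_Dot_cong:
  assumes "mcs X" "\<And>v. peval v a = peval v b"
  shows "Dot a \<in> X \<longleftrightarrow> Dot b \<in> X"
  using assms by (intro mcs_Dot_iff kthm.Tau) (simp_all add: taut_def)

subsection \<open>The canonical model\<close>

definition nec :: "'p fm set \<Rightarrow> 'p fm set" where
  "nec s = {a. \<forall>b. Dot (Disj a b) \<in> s}"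

lemma nec_Dot: "mcs s \<Longrightarrow> a \<in> nec s \<Longrightarrow> Dot a \<in> s"
  by (auto simp: nec_def dest: spec[of _ a] mcs_Dot_cong[of s "Disj a a" a])

lemma nec_Top: "mcs s \<Longrightarrow> Top \<in> nec s"
  unfolding nec_def using mcs_kthm[OF _ kthm.DotTop] mcs_Dot_cong[of s Top] by fastforce

lemma nec_taut_mono:
  assumes "mcs s" "a \<in> nec s" "kthm (Imp a c)"
  shows "c \<in> nec s"
proof -
  have "kthm (Iff (Disj a (Disj c b)) (Disj c b))" for b
    by (rule kthm_taut_consequence[of "[Imp a c]"]) (use assms(3) in auto)
  then have "Dot (Disj a (Disj c b)) \<in> s \<longleftrightarrow> Dot (Disj c b) \<in> s" for b
    by (rule mcs_Dot_iff[OF assms(1)])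
  then show ?thesis using assms(2) by (auto simp: nec_def)
qed

lemma nec_Conj:
  assumes "mcs s" "a \<in> nec s" "c \<in> nec s"
  shows "Conj a c \<in> nec s"
proof -
  have "Dot (Conj (Disj a b) (Disj c b)) \<in> s" for b
    using assms mcs_Imp[OF assms(1) mcs_kthm[OF assms(1) kthm.DotConj]]
    by (simp add: nec_def mcs_Conj)
  moreover have "Dot (Conj (Disj a b) (Disj c b)) \<in> s \<longleftrightarrow> Dot (Disj (Conj a c) b) \<in> s" for b
    using assms(1) by (rule mcs_Dot_cong) auto
  ultimately show ?thesis by (simp add: nec_def)
qed

lemma nec_derives: "mcs s \<Longrightarrow> derives (nec s) a \<Longrightarrow> a \<in> nec s"
proof -
  assume "mcs s" "derives (nec s) a"
  then obtain xs where xs: "set xs \<subseteq> nec s" "kthm (foldr Imp xs a)"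
    by (auto simp: derives_def)
  have "foldr Conj xs Top \<in> nec s"
    using xs(1) by (induct xs) (auto intro: nec_Top nec_Conj \<open>mcs s\<close>)
  moreover have "kthm (Imp (foldr Conj xs Top) a)"
    by (rule kthm_taut_consequence[of "[foldr Imp xs a]"])
      (use xs in \<open>auto simp: peval_foldr_Imp peval_foldr_Conj\<close>)
  ultimately show ?thesis using nec_taut_mono \<open>mcs s\<close> by blast
qed

lemma nec_decides:
  assumes "mcs s" "Dot a \<in> s"
  shows "a \<in> nec s \<or> Neg a \<in> nec s"
proof (cases "a \<in> nec s")
  case False
  then obtain b where b: "Dot (Disj a b) \<notin> s" by (auto simp: nec_def)
  have "Disj (Dot (Disj a b)) (Dot (Disj (Neg a) c)) \<in> s" for c
    by (rule mcs_Imp[OF assms(1) mcs_kthm[OF assms(1) kthm.DotDisj] assms(2)])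
  then show ?thesis using b mcs_Disj[OF assms(1)] by (auto simp: nec_def)
qed simp

definition succ_base :: "'p fm set \<Rightarrow> 'p fm set" where
  "succ_base s = (if Bot \<in> nec s then s else nec s)"

lemma consistent_succ_base: "mcs s \<Longrightarrow> consistent (succ_base s)"
  using nec_derives by (fastforce simp: succ_base_def consistent_def mcs_def)

lemma succ_base_Dot: "mcs s \<Longrightarrow> a \<in> succ_base s \<Longrightarrow> Dot a \<in> s"
  unfolding succ_base_def
  by (metis nec_Dot nec_taut_mono kthm.Tau peval_derived(2,3) taut_def)

lemma succ_base_Neg_Dot: "mcs s \<Longrightarrow> Neg a \<in> succ_base s \<Longrightarrow> Dot a \<in> s"
  using succ_base_Dot mcs_Iff mcs_kthm kthm.DotNeg by blast

lemma succ_base_derives: "mcs s \<Longrightarrow> derives (succ_base s) a \<Longrightarrow> a \<in> succ_base s"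
  by (auto simp: succ_base_def intro: mcs_derives nec_derives)

lemma succ_base_decides: "mcs s \<Longrightarrow> Dot a \<in> s \<Longrightarrow> a \<in> succ_base s \<or> Neg a \<in> succ_base s"
  using nec_decides mcs_Neg by (auto simp: succ_base_def)

definition canon_rel :: "'p fm set \<Rightarrow> 'p fm set \<Rightarrow> bool" where
  "canon_rel s t \<longleftrightarrow> mcs s \<and> mcs t \<and> succ_base s \<subseteq> t"

definition canon_val :: "'p \<Rightarrow> 'p fm set set" where
  "canon_val p = {X. mcs X \<and> Atom p \<in> X}"

lemma Dot_mem_iff_successors_agree:
  assumes "mcs s"
  shows "Dot a \<in> s \<longleftrightarrow> (\<forall>t u. canon_rel s t \<longrightarrow> canon_rel s u \<longrightarrow> (a \<in> t \<longleftrightarrow> a \<in> u))"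
proof
  assume "Dot a \<in> s"
  then have "a \<in> succ_base s \<or> Neg a \<in> succ_base s" by (rule succ_base_decides[OF assms])
  then show "\<forall>t u. canon_rel s t \<longrightarrow> canon_rel s u \<longrightarrow> (a \<in> t \<longleftrightarrow> a \<in> u)"
    using mcs_Neg unfolding canon_rel_def by blast
next
  assume agree: "\<forall>t u. canon_rel s t \<longrightarrow> canon_rel s u \<longrightarrow> (a \<in> t \<longleftrightarrow> a \<in> u)"
  show "Dot a \<in> s"
  proof (rule ccontr)
    assume "Dot a \<notin> s"
    then have "\<not> derives (succ_base s) a" "\<not> derives (succ_base s) (Neg a)"
      using assms succ_base_derives succ_base_Dot succ_base_Neg_Dot by blast+
    then obtain t u where t: "insert (Neg a) (succ_base s) \<subseteq> t" "mcs t"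
      and u: "insert (Neg (Neg a)) (succ_base s) \<subseteq> u" "mcs u"
      by (metis consistent_insert_Neg lindenbaum)
    then have "a \<notin> t" "a \<in> u"
      using mcs_Neg[OF t(2)] mcs_Neg[OF u(2)] by auto
    moreover have "canon_rel s t" "canon_rel s u"
      using t u assms by (auto simp: canon_rel_def)
    ultimately show False using agree by blast
  qed
qed

abbreviation canon_sat :: "'p fm set \<Rightarrow> 'p fm \<Rightarrow> bool" where
  "canon_sat \<equiv> sat {X. mcs X} canon_rel canon_rel canon_val"

lemma truth_lemma: "mcs s \<Longrightarrow> canon_sat s a \<longleftrightarrow> a \<in> s"
proof (induct a arbitrary: s)
  case (Dot a)
  have "canon_sat t a \<longleftrightarrow> a \<in> t" if "canon_rel s t" for t
    by (rule Dot.hyps) (use that in \<open>simp add: canon_rel_def\<close>)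
  then have "canon_sat s (Dot a) \<longleftrightarrow>
      (\<forall>t u. canon_rel s t \<longrightarrow> canon_rel s u \<longrightarrow> (a \<in> t \<longleftrightarrow> a \<in> u))"
    by (auto simp: canon_rel_def[of s])
  then show ?case using Dot_mem_iff_successors_agree[OF Dot.prems] by blast
qed (simp_all add: canon_val_def mcs_Neg mcs_Conj)

lemma canonical_model: "model {X :: 'p fm set. mcs X} canon_rel canon_rel canon_val"
proof -
  obtain M :: "'p fm set" where "mcs M" using lindenbaum[OF consistent_empty] by blast
  then show ?thesis by (auto simp: model_def canon_rel_def canon_val_def)
qed

lemma canonical_serial: "serial {X. mcs X} canon_rel"
  unfolding serial_def canon_rel_def
  by (metis consistent_succ_base lindenbaum mem_Collect_eq)

lemma serial_conseq_derives: "serial_conseq TYPE('p fm set) G a \<Longrightarrow> derives G (a :: 'p fm)"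
proof (rule ccontr)
  assume conseq: "serial_conseq TYPE('p fm set) G a" and "\<not> derives G a"
  then obtain M where M: "insert (Neg a) G \<subseteq> M" "mcs M"
    by (metis consistent_insert_Neg lindenbaum)
  have "canon_sat M a"
    by (rule conseq[unfolded serial_conseq_def, rule_format])
      (use M canonical_model canonical_serial truth_lemma in auto)
  then show False using M truth_lemma mcs_Neg by blast
qed

theorem mainTheorem11:
  fixes G :: "'p fm set" and a :: "'p fm"
  shows "(derives G a \<longrightarrow> serial_conseq TYPE('s) G a)
       \<and> (derives G a \<longleftrightarrow> serial_conseq TYPE('p fm set) G a)"
proof (intro conjI impI iffI)
  show "derives G a \<Longrightarrow> serial_conseq TYPE('s) G a" by (rule derives_serial_conseq)
  show "derives G a \<Longrightarrow> serial_conseq TYPE('p fm set) G a" by (rule derives_serial_conseq)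
  show "serial_conseq TYPE('p fm set) G a \<Longrightarrow> derives G a" by (rule serial_conseq_derives)
qed

end
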